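(* Let $H$ be a graph with a cut edge $e=(u,w)$. Then for every pattern $\mathbf{s}$ with $N(H)\mathbf{s}=\mathbf{1}$, either $\mathbf{s}(u)=0$ or $\mathbf{s}(w)=0$.
   Context: For a finite simple graph $H$ with vertex set $\{v_1,\dots,v_n\}$, the closed adjacency matrix $N(H)$ is the $n\times n$ matrix over $\mathbb{Z}_2$ whose $(i,j)$ entry is $1$ iff $i=j$ or $v_i$ is adjacent to $v_j$; patterns are vectors in $\mathbb{Z}_2^{V(H)}$ and $\mathbf{1}$ is the all-ones vector. A cut edge is an edge whose deletion increases the number of connected components. *)

theory Defs
  imports Main "HOL-Library.Z2"
begin

definition simple_graph :: "'a set \<Rightarrow> ('a \<Rightarrow> 'a \<Rightarrow> bool) \<Rightarrow> bool" where
  "simple_graph V E \<longleftrightarrow> finite V \<and> (\<forall>x y. E x y \<longrightarrow> x \<in> V \<and> y \<in> V)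
     \<and> (\<forall>x y. E x y \<longrightarrow> E y x) \<and> (\<forall>x. \<not> E x x)"

definition closed_adj :: "('a \<Rightarrow> 'a \<Rightarrow> bool) \<Rightarrow> 'a \<Rightarrow> 'a \<Rightarrow> bit" where
  "closed_adj E x y = (if x = y \<or> E x y then 1 else 0)"

definition closed_adj_mult :: "'a set \<Rightarrow> ('a \<Rightarrow> 'a \<Rightarrow> bool) \<Rightarrow> ('a \<Rightarrow> bit) \<Rightarrow> 'a \<Rightarrow> bit" where
  "closed_adj_mult V E s x = (\<Sum>y\<in>V. closed_adj E x y * s y)"

definition conn_rel :: "'a set \<Rightarrow> ('a \<Rightarrow> 'a \<Rightarrow> bool) \<Rightarrow> ('a \<times> 'a) set" where
  "conn_rel V E = ({(x, y). x \<in> V \<and> y \<in> V \<and> E x y})\<^sup>* \<inter> (V \<times> V)"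

definition num_components :: "'a set \<Rightarrow> ('a \<Rightarrow> 'a \<Rightarrow> bool) \<Rightarrow> nat" where
  "num_components V E = card (V // conn_rel V E)"

definition delete_edge :: "('a \<Rightarrow> 'a \<Rightarrow> bool) \<Rightarrow> 'a \<Rightarrow> 'a \<Rightarrow> 'a \<Rightarrow> 'a \<Rightarrow> bool" where
  "delete_edge E u w = (\<lambda>x y. E x y \<and> {x, y} \<noteq> {u, w})"

definition cut_edge :: "'a set \<Rightarrow> ('a \<Rightarrow> 'a \<Rightarrow> bool) \<Rightarrow> 'a \<Rightarrow> 'a \<Rightarrow> bool" where
  "cut_edge V E u w \<longleftrightarrow> E u w \<and>
     num_components V (delete_edge E u w) > num_components V E"

end

(* Let C be the component of u in H - uw. Because uw is a cut edge, w is not in C and uw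
   is the only edge of H leaving C. Weighting the equations (N s)(x) = 1 by s(x) and summing
   over x in C gives sum_{x in C} s(x) = s^T N[C] s + s(u) s(w). Over Z_2 the off-diagonal
   terms of the symmetric form s^T N[C] s cancel in pairs and the diagonal ones are
   s(x)^2 = s(x), so s^T N[C] s = sum_{x in C} s(x) and hence s(u) s(w) = 0. *)

theory Submission
  imports Defs
begin

text \<open>The library's default simp rules rewrite \<open>+\<close> and \<open>*\<close> on \<open>bit\<close> into \<open>of_bool\<close>
  expressions, which defeats ring reasoning on sums.\<close>

declare add_bit_eq_xor [simp del] mult_bit_eq_and [simp del]

lemma bit_add_self [simp]: "(x::bit) + x = 0"
  by (cases x) simp_all

lemma bit_mult_self [simp]: "(x::bit) * x = x"
  by (cases x) simp_all

lemma sum_symmetric_square_eq_diagonal: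
  fixes f :: "'a \<Rightarrow> 'a \<Rightarrow> 'b::comm_monoid_add"
  assumes "finite C" and "\<And>x y. f x y = f y x" and char_two: "\<And>z::'b. z + z = 0"
  shows "(\<Sum>x\<in>C. \<Sum>y\<in>C. f x y) = (\<Sum>x\<in>C. f x x)"
  using assms(1)
proof (induction C rule: finite_induct)
  case empty
  then show ?case by simp
next
  case (insert a C)
  have "(\<Sum>x\<in>insert a C. \<Sum>y\<in>insert a C. f x y)
      = f a a + ((\<Sum>y\<in>C. f a y) + (\<Sum>x\<in>C. f x a)) + (\<Sum>x\<in>C. \<Sum>y\<in>C. f x y)"
    using insert.hyps by (simp add: sum.distrib ac_simps)
  also have "(\<Sum>x\<in>C. f x a) = (\<Sum>y\<in>C. f a y)"
    using assms(2) by (intro sum.cong) auto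
  finally show ?case
    using insert by (simp add: char_two)
qed

lemma boundary_sum_eq_zero:
  assumes "finite V" and "\<And>x y. E x y \<Longrightarrow> E y x" and "C \<subseteq> V"
    and "\<forall>x\<in>C. closed_adj_mult V E s x = 1"
  shows "(\<Sum>x\<in>C. \<Sum>y\<in>V - C. s x * closed_adj E x y * s y) = 0"
proof -
  let ?B = "\<Sum>x\<in>C. \<Sum>y\<in>V - C. s x * closed_adj E x y * s y"
  have fin_C: "finite C" using assms(1,3) finite_subset by blast
  have row_split: "s x * closed_adj_mult V E s x
      = (\<Sum>y\<in>C. s x * closed_adj E x y * s y) + (\<Sum>y\<in>V - C. s x * closed_adj E x y * s y)" for x
    unfolding closed_adj_mult_def sum.subset_diff[OF assms(3,1)]
    by (simp add: sum_distrib_left distrib_left add.commute mult.assoc)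
  have "(\<Sum>x\<in>C. s x) = (\<Sum>x\<in>C. s x * closed_adj_mult V E s x)"
    using assms(4) by (intro sum.cong) auto
  also have "\<dots> = (\<Sum>x\<in>C. \<Sum>y\<in>C. s x * closed_adj E x y * s y) + ?B"
    by (simp add: row_split sum.distrib)
  also have "(\<Sum>x\<in>C. \<Sum>y\<in>C. s x * closed_adj E x y * s y) = (\<Sum>x\<in>C. s x)"
    using assms(2)
    by (subst sum_symmetric_square_eq_diagonal[OF fin_C])
       (auto simp: closed_adj_def)
  finally show ?thesis
    by simp
qed

lemma boundary_sum_single_edge:
  assumes "finite V" and "C \<subseteq> V" and "u \<in> C" and "w \<in> V - C" and "E u w"
    and "\<And>x y. x \<in> C \<Longrightarrow> y \<in> V - C \<Longrightarrow> E x y \<Longrightarrow> x = u \<and> y = w"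
  shows "(\<Sum>x\<in>C. \<Sum>y\<in>V - C. s x * closed_adj E x y * s y) = s u * s w"
proof -
  have row: "(\<Sum>y\<in>V - C. s x * closed_adj E x y * s y) = (if x = u then s u * s w else 0)"
    if x_C: "x \<in> C" for x
  proof -
    have "closed_adj E x y = (if x = u \<and> y = w then 1 else 0)" if y_C: "y \<in> V - C" for y
    proof -
      have "x \<noteq> y" using x_C y_C by blast
      then show ?thesis
        using assms(5) assms(6)[OF x_C y_C] unfolding closed_adj_def by (cases "E x y") auto
    qed
    then have "(\<Sum>y\<in>V - C. s x * closed_adj E x y * s y)
        = (\<Sum>y\<in>V - C. if y = w then (if x = u then s u * s w else 0) else 0)"
      by (intro sum.cong) auto
    also have "\<dots> = (if x = u then s u * s w else 0)"
      using assms(1,4) by simp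
    finally show ?thesis .
  qed
  have "(\<Sum>x\<in>C. \<Sum>y\<in>V - C. s x * closed_adj E x y * s y)
      = (\<Sum>x\<in>C. if x = u then s u * s w else 0)"
    using row by (intro sum.cong) auto
  also have "\<dots> = s u * s w"
    using finite_subset[OF assms(2,1)] assms(3) by simp
  finally show ?thesis .
qed

lemma sym_conn_rel:
  assumes "\<And>x y. E x y \<Longrightarrow> E y x"
  shows "sym (conn_rel V E)"
proof -
  have "sym {(x, y). x \<in> V \<and> y \<in> V \<and> E x y}"
    using assms by (auto intro: symI)
  then show ?thesis
    unfolding conn_rel_def by (intro sym_Int sym_rtrancl) (auto intro: symI)
qed

lemma conn_rel_step:
  assumes "(a, x) \<in> conn_rel V E" and "y \<in> V" and "E x y"
  shows "(a, y) \<in> conn_rel V E"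
  using assms unfolding conn_rel_def by (auto intro: rtrancl_into_rtrancl)

lemma conn_rel_delete_edge_eq:
  assumes "\<And>x y. E x y \<Longrightarrow> E y x" and "(u, w) \<in> conn_rel V (delete_edge E u w)"
  shows "conn_rel V (delete_edge E u w) = conn_rel V E"
proof -
  let ?R = "{(x, y). x \<in> V \<and> y \<in> V \<and> E x y}"
  let ?R' = "{(x, y). x \<in> V \<and> y \<in> V \<and> delete_edge E u w x y}"
  have sym_E': "delete_edge E u w x y \<Longrightarrow> delete_edge E u w y x" for x y
    using assms(1) by (auto simp: delete_edge_def insert_commute)
  have uw: "(u, w) \<in> ?R'\<^sup>*" and wu: "(w, u) \<in> ?R'\<^sup>*"
    using assms(2) sym_conn_rel[of "delete_edge E u w" V, OF sym_E']
    unfolding conn_rel_def by (auto dest: symD)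
  have "?R \<subseteq> ?R'\<^sup>*"
  proof safe
    fix x y assume "x \<in> V" "y \<in> V" "E x y"
    then show "(x, y) \<in> ?R'\<^sup>*"
      using uw wu by (cases "{x, y} = {u, w}") (auto simp: delete_edge_def doubleton_eq_iff)
  qed
  then have "?R\<^sup>* \<subseteq> ?R'\<^sup>*"
    by (rule rtrancl_subset_rtrancl)
  moreover have "?R'\<^sup>* \<subseteq> ?R\<^sup>*"
    by (rule rtrancl_mono) (auto simp: delete_edge_def)
  ultimately have "?R'\<^sup>* = ?R\<^sup>*"
    by (rule subset_antisym[rotated])
  then show ?thesis
    unfolding conn_rel_def by simp
qed

lemma cut_edge_disconnects:
  assumes "\<And>x y. E x y \<Longrightarrow> E y x" and "cut_edge V E u w"
  shows "(u, w) \<notin> conn_rel V (delete_edge E u w)"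
proof
  assume "(u, w) \<in> conn_rel V (delete_edge E u w)"
  with assms(1) have "conn_rel V (delete_edge E u w) = conn_rel V E"
    by (rule conn_rel_delete_edge_eq)
  then show False
    using assms(2) unfolding cut_edge_def num_components_def by simp
qed

lemma cut_edge_component_boundary:
  assumes "\<And>x y. E x y \<Longrightarrow> E y x" and "cut_edge V E u w"
    and "x \<in> conn_rel V (delete_edge E u w) `` {u}" and "y \<in> V"
    and "y \<notin> conn_rel V (delete_edge E u w) `` {u}" and "E x y"
  shows "x = u \<and> y = w"
proof -
  have "\<not> delete_edge E u w x y"
    using assms(3-5) conn_rel_step[of u x V "delete_edge E u w" y] by blast
  then have "x = u \<and> y = w \<or> x = w \<and> y = u"
    using assms(6) by (auto simp: delete_edge_def doubleton_eq_iff)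
  then show ?thesis
    using assms(3) cut_edge_disconnects[OF assms(1,2)] by auto
qed

theorem lemma3p1:
  fixes V :: "'a set" and E :: "'a \<Rightarrow> 'a \<Rightarrow> bool" and u w :: 'a and s :: "'a \<Rightarrow> bit"
  assumes "simple_graph V E"
    and "cut_edge V E u w"
    and "\<forall>x\<in>V. closed_adj_mult V E s x = 1"
  shows "s u = 0 \<or> s w = 0"
proof -
  have fin: "finite V" and E_V: "\<And>x y. E x y \<Longrightarrow> x \<in> V \<and> y \<in> V"
    and E_sym: "\<And>x y. E x y \<Longrightarrow> E y x"
    using assms(1) unfolding simple_graph_def by blast+
  have E_uw: "E u w"
    using assms(2) unfolding cut_edge_def by blast
  then have u_V: "u \<in> V" and w_V: "w \<in> V"
    using E_V by blast+
  define C where "C = conn_rel V (delete_edge E u w) `` {u}"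
  have C_V: "C \<subseteq> V"
    unfolding C_def conn_rel_def by auto
  have u_C: "u \<in> C"
    using u_V unfolding C_def conn_rel_def by auto
  have w_C: "w \<in> V - C"
    using w_V cut_edge_disconnects[OF E_sym assms(2)] unfolding C_def by auto
  have boundary: "\<And>x y. x \<in> C \<Longrightarrow> y \<in> V - C \<Longrightarrow> E x y \<Longrightarrow> x = u \<and> y = w"
    using cut_edge_component_boundary[OF E_sym assms(2)] unfolding C_def by blast
  have "s u * s w = (\<Sum>x\<in>C. \<Sum>y\<in>V - C. s x * closed_adj E x y * s y)"
    using boundary_sum_single_edge[of V C u w E, OF fin C_V u_C w_C E_uw boundary] by simp
  also have "\<dots> = 0"
    using boundary_sum_eq_zero[of V E, OF fin E_sym C_V] assms(3) C_V by auto
  finally have "s u * s w = 0" .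
  then show ?thesis by simp
qed

end
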